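(* For integers $0\le l\le m$, let $d_{l,m}=2^{-2m}\sum_{k=l}^{m}2^{k}\binom{2m-2k}{m-k}\binom{m+k}{m}\binom{k}{l}$. Then $$d_{l,m}=\sum_{j=0}^{l}\sum_{s=0}^{m-l}\sum_{k=s+l}^{m}\frac{(-1)^{k-l-s}}{2^{3k}}\binom{2k}{k}\binom{2m+1}{2s+2j}\binom{m-s-j}{m-k}\binom{s+j}{j}\binom{k-s-j}{l-j}.$$ Equivalently, with $P_m(a)=\sum_{l=0}^m d_{l,m}a^l$, $$P_{m}(a)=\sum_{j=0}^{m}\binom{2m+1}{2j}(a+1)^{j}\sum_{k=0}^{m-j}\binom{m-j}{k}\binom{2(m-k)}{m-k}2^{-3(m-k)}(a-1)^{m-k-j}.$$
   Context: Binomial coefficients $\binom{n}{k}$ with $k<0$ or $k>n$ (for $n\ge 0$) are taken to be $0$. *)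

theory Defs
  imports Complex_Main
begin

definition d_coef :: "nat \<Rightarrow> nat \<Rightarrow> real" where
  "d_coef l m = (1 / 2 ^ (2*m)) *
     (\<Sum>k=l..m. 2 ^ k * real ((2*m - 2*k) choose (m - k)) * real ((m + k) choose m) * real (k choose l))"

definition P_poly :: "nat \<Rightarrow> real \<Rightarrow> real" where
  "P_poly m a = (\<Sum>l=0..m. d_coef l m * a ^ l)"

end

theory Submission
  imports Defs
begin

text \<open>
  Both claims are statements about the polynomial P_m(a) = sum_l d_(l,m) a^l.
  Writing P_m in powers of a+1 gives  P_m(a) = sum_n e(m,n) (a+1)^n  with
  e(m,n) = 2^(n-2m) C(2m-2n,m-n) C(m+n,m).  The right-hand side Q_m(a) of the polynomial
  identity is re-expanded in powers of a+1 as well: substituting a-1 = (a+1)-2 (a Taylor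
  shift) its coefficient of (a+1)^n becomes a product  even_coef m n * shift_coef m n  of
  two binomial sums.  Both sums have closed forms:
    sum_J C(2m+1,2J) C(m-J,n-J) = 4^n C(m+n,2n)   (the polynomial sum_J C(2m+1,2J) w^J (1+w)^(m-J)
       is an even part of (sqrt(1+w) + sqrt w)^(2m+1) and satisfies the Morgan-Voyce recurrence),
    sum_t C(p,t) (-1/4)^t C(2n+2t,n+t) = (2p)! (2n)! / (4^p p! n! (n+p)!)   (induction on p),
  and their product is exactly e(m,n); this proves P_m = Q_m.  Expanding (a+1)^j (a-1)^r in
  Q_m(a) in powers of a and reindexing the resulting triple sum shows that the coefficient of
  a^l in Q_m(a) is the triple sum of the theorem, and comparing coefficients gives the formula
  for d_(l,m).
\<close>

lemma sum_triangle:
  fixes g :: "nat \<Rightarrow> nat \<Rightarrow> 'a::comm_monoid_add"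
  shows "(\<Sum>i\<le>m. \<Sum>j\<le>m-i. g i j) = (\<Sum>k\<le>m. \<Sum>i\<le>k. g i (k - i))"
  using sum.triangle_reindex_eq[of g m] by (simp add: pairs_le_eq_Sigma sum.Sigma)

text \<open>Polynomials that agree on [0, oo) have the same coefficients: their difference
  would otherwise have only finitely many roots.\<close>
lemma coeffs_eq_on_nonneg:
  fixes c d :: "nat \<Rightarrow> real"
  assumes "\<And>w. w \<ge> 0 \<Longrightarrow> (\<Sum>i\<le>n. c i * w^i) = (\<Sum>i\<le>n. d i * w^i)" and "k \<le> n"
  shows "c k = d k"
proof (rule ccontr)
  assume ne: "c k \<noteq> d k"
  have "finite {w. (\<Sum>i\<le>n. (c i - d i) * w^i) = 0}"
    by (rule polyfun_roots_finite[of "\<lambda>i. c i - d i" k]) (use ne assms(2) in auto)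
  moreover have "{0::real..} \<subseteq> {w. (\<Sum>i\<le>n. (c i - d i) * w^i) = 0}"
    using assms(1) by (auto simp: left_diff_distrib sum_subtractf)
  ultimately show False using infinite_Ici finite_subset by blast
qed

lemma odd_power_even_part:
  fixes a b :: real
  shows "(a+b)^(2*m+1) + (a-b)^(2*m+1)
       = 2*a*(\<Sum>J\<le>m. real ((2*m+1) choose (2*J)) * (b^2)^J * (a^2)^(m-J))"
proof -
  let ?N = "2*m+1"
  define h where "h k = real (?N choose k) * (b^k + (-b)^k) * a^(?N-k)" for k
  have "(a+b)^?N + (a-b)^?N = (b+a)^?N + (-b+a)^?N"
    by (simp add: add.commute)
  also have "\<dots> = (\<Sum>k\<le>?N. h k)"
    unfolding binomial_ring sum.distrib[symmetric] h_def by (simp add: ring_distribs)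
  also have "\<dots> = (\<Sum>k<2*(m+1). if even k then h k else 0)"
    by (rule sum.cong) (auto simp: h_def lessThan_Suc_atMost[symmetric])
  also have "\<dots> = (\<Sum>i<m+1. h (2*i))"
    using sum_split_even_odd[of h "\<lambda>_. 0" "m+1"] by simp
  also have "\<dots> = (\<Sum>i\<le>m. 2*a*(real (?N choose (2*i)) * (b^2)^i * (a^2)^(m-i)))"
  proof (rule sum.cong)
    fix i assume "i \<in> {..m}"
    then have "?N - 2*i = Suc (2*(m-i))" by simp
    then have "a^(?N - 2*i) = a * (a^2)^(m-i)" by (simp only: power_Suc power_mult)
    then show "h (2*i) = 2*a*(real (?N choose (2*i)) * (b^2)^i * (a^2)^(m-i))"
      by (simp add: h_def power_mult[symmetric] algebra_simps)
  qed (simp add: lessThan_Suc_atMost)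
  finally show ?thesis by (simp add: sum_distrib_left)
qed

text \<open>E_m(w) = sum_J C(2m+1,2J) w^J (1+w)^(m-J).  Its coefficients are the outer factors
  of the right-hand side of the theorem once everything is written in powers of a+1.\<close>
definition even_sum :: "nat \<Rightarrow> real \<Rightarrow> real" where
  "even_sum m w = (\<Sum>J\<le>m. real ((2*m+1) choose (2*J)) * w^J * (1+w)^(m-J))"

lemma even_sum_sqrt:
  assumes "w \<ge> 0"
  shows "2 * sqrt (1+w) * even_sum m w
       = (sqrt (1+w) + sqrt w)^(2*m+1) + (sqrt (1+w) - sqrt w)^(2*m+1)"
  using assms by (simp only: odd_power_even_part even_sum_def real_sqrt_pow2)

lemma fourth_power_hyperbolic:
  fixes s r :: "'a::comm_ring_1"
  assumes "s^2 - r^2 = 1"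
  shows "(s+r)^4 = 2*(s^2+r^2) * (s+r)^2 - 1"
proof -
  have "(s+r)^4 - 2*(s^2+r^2) * (s+r)^2 = -((s^2 - r^2)^2)"
    by (simp add: power2_eq_square power4_eq_xxxx algebra_simps)
  then show ?thesis using assms by (simp add: diff_eq_eq)
qed

lemma odd_power_three_term:
  fixes x c :: "'a::comm_ring_1"
  assumes "x^4 = c * x^2 - 1"
  shows "x^(2*(m+2)+1) = c * x^(2*(m+1)+1) - x^(2*m+1)"
proof -
  have A: "x^(2*(m+2)+1) = x^(2*m+1) * x^4" and B: "x^(2*(m+1)+1) = x^(2*m+1) * x^2"
    by (simp only: power_add[symmetric], rule arg_cong[where f="power x"], simp)+
  show ?thesis unfolding A B assms by (simp add: algebra_simps)
qed

lemma even_sum_rec: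
  assumes "w \<ge> 0"
  shows "even_sum (m+2) w = (2+4*w) * even_sum (m+1) w - even_sum m w"
proof -
  define s where "s = sqrt (1+w)"
  define r where "r = sqrt w"
  have s2: "s^2 = 1+w" and r2: "r^2 = w" and pos: "s > 0"
    using assms by (simp_all add: s_def r_def)
  have plus: "(s+r)^4 = (2+4*w) * (s+r)^2 - 1"
    using fourth_power_hyperbolic[of s r] s2 r2 by simp
  have minus: "(s-r)^4 = (2+4*w) * (s-r)^2 - 1"
    using fourth_power_hyperbolic[of s "-r"] s2 r2 by simp
  have rec: "(s+r)^(2*(m+2)+1) = (2+4*w) * (s+r)^(2*(m+1)+1) - (s+r)^(2*m+1)"
            "(s-r)^(2*(m+2)+1) = (2+4*w) * (s-r)^(2*(m+1)+1) - (s-r)^(2*m+1)"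
    using odd_power_three_term[OF plus] odd_power_three_term[OF minus] by blast+
  have E: "2 * s * even_sum k w = (s+r)^(2*k+1) + (s-r)^(2*k+1)" for k
    unfolding s_def r_def by (rule even_sum_sqrt[OF assms])
  have "2 * s * even_sum (m+2) w = (2+4*w) * (2 * s * even_sum (m+1) w) - 2 * s * even_sum m w"
    unfolding E rec by (simp add: algebra_simps)
  also have "\<dots> = 2 * s * ((2+4*w) * even_sum (m+1) w - even_sum m w)"
    by (simp add: algebra_simps)
  finally show ?thesis using pos by simp
qed

definition morgan_voyce :: "nat \<Rightarrow> real \<Rightarrow> real" where
  "morgan_voyce m z = (\<Sum>n\<le>m. real ((m+n) choose (2*n)) * z^n)"

lemma morgan_voyce_upto:
  assumes "m \<le> K"
  shows "morgan_voyce m z = (\<Sum>n\<le>K. real ((m+n) choose (2*n)) * z^n)"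
  unfolding morgan_voyce_def using assms by (intro sum.mono_neutral_left) auto

text \<open>Pascal's rule applied twice, in the shape needed for the Morgan-Voyce recurrence.\<close>
lemma choose_two_step_pascal:
  "((m+2+n) choose (2*n)) + ((m+n) choose (2*n))
     = 2 * ((m+1+n) choose (2*n)) + (if n = 0 then 0 else (m+n) choose (2*n-2))"
proof (cases n)
  case (Suc k)
  then have "2*n = Suc (Suc (2*k))" "2*n-2 = 2*k" "m+2+n = Suc (Suc (m+n))" "m+1+n = Suc (m+n)"
    by simp_all
  then show ?thesis using Suc by simp
qed simp

text \<open>B_m satisfies the same recurrence as E_m, with z = 4w.\<close>
lemma morgan_voyce_rec:
  "morgan_voyce (m+2) z = (2+z) * morgan_voyce (m+1) z - morgan_voyce m z"
proof -
  let ?K = "Suc (m+1)"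
  have coeff: "real ((m+2+n) choose (2*n)) = 2*real ((m+1+n) choose (2*n)) - real ((m+n) choose (2*n))
      + (if n = 0 then 0 else real ((m+n) choose (2*n-2)))" for n
    using arg_cong[OF choose_two_step_pascal[of m n], of real] by (simp split: if_splits)
  have shift: "z * morgan_voyce (m+1) z
      = (\<Sum>n\<le>?K. (if n = 0 then 0 else real ((m+n) choose (2*n-2))) * z^n)"
    unfolding morgan_voyce_def sum.atMost_Suc_shift by (simp add: sum_distrib_left algebra_simps)
  have "morgan_voyce (m+2) z = (\<Sum>n\<le>?K. real ((m+2+n) choose (2*n)) * z^n)"
    by (rule morgan_voyce_upto) simp
  also have "\<dots> = 2 * (\<Sum>n\<le>?K. real ((m+1+n) choose (2*n)) * z^n)
      - (\<Sum>n\<le>?K. real ((m+n) choose (2*n)) * z^n) + z * morgan_voyce (m+1) z"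
    unfolding coeff shift by (simp add: sum.distrib sum_subtractf sum_distrib_left algebra_simps)
  also have "\<dots> = (2+z) * morgan_voyce (m+1) z - morgan_voyce m z"
    using morgan_voyce_upto[of "m+1" ?K z] morgan_voyce_upto[of m ?K z] by (simp add: algebra_simps)
  finally show ?thesis .
qed

text \<open>Same initial values and same recurrence, hence E_m(w) = B_m(4w) for w >= 0.\<close>
lemma even_sum_morgan_voyce:
  assumes "w \<ge> 0"
  shows "even_sum m w = morgan_voyce m (4*w)"
proof -
  have "even_sum m w = morgan_voyce m (4*w) \<and> even_sum (m+1) w = morgan_voyce (m+1) (4*w)"
  proof (induction m)
    case 0
    have "(3::nat) choose 2 = 3" "Suc (Suc 0) choose 2 = Suc 0" by (simp_all add: choose_two)
    then show ?case by (simp add: even_sum_def morgan_voyce_def)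
  next
    case (Suc m)
    then show ?case using even_sum_rec[OF assms, of m] morgan_voyce_rec[of m "4*w"] by simp
  qed
  then show ?thesis by simp
qed

definition even_coef :: "nat \<Rightarrow> nat \<Rightarrow> real" where
  "even_coef m n = (\<Sum>J\<le>n. real ((2*m+1) choose (2*J)) * real ((m-J) choose (n-J)))"

lemma even_sum_expand: "even_sum m w = (\<Sum>n\<le>m. even_coef m n * w^n)"
proof -
  have "even_sum m w
      = (\<Sum>J\<le>m. \<Sum>i\<le>m-J. real ((2*m+1) choose (2*J)) * real ((m-J) choose i) * w^(J+i))"
    unfolding even_sum_def binomial_ring[of w 1, simplified add.commute]
    by (simp add: sum_distrib_left power_add algebra_simps)
  also have "\<dots> = (\<Sum>n\<le>m. even_coef m n * w^n)"
    unfolding sum_triangle even_coef_def by (simp add: sum_distrib_right)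
  finally show ?thesis .
qed

lemma even_coef_closed:
  assumes "n \<le> m"
  shows "even_coef m n = 4^n * real ((m+n) choose (2*n))"
proof (rule coeffs_eq_on_nonneg[OF _ assms])
  fix w :: real assume "w \<ge> 0"
  then show "(\<Sum>i\<le>m. even_coef m i * w^i) = (\<Sum>i\<le>m. 4^i * real ((m+i) choose (2*i)) * w^i)"
    by (simp add: even_sum_morgan_voyce flip: even_sum_expand)
       (simp add: morgan_voyce_def algebra_simps)
qed

lemma binomial_sum_Suc:
  fixes g :: "nat \<Rightarrow> 'a::comm_semiring_1"
  shows "(\<Sum>t\<le>Suc p. of_nat (Suc p choose t) * g t)
       = (\<Sum>t\<le>p. of_nat (p choose t) * g t) + (\<Sum>t\<le>p. of_nat (p choose t) * g (Suc t))"
proof -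
  have "(\<Sum>t\<le>Suc p. of_nat (Suc p choose t) * g t)
      = g 0 + (\<Sum>t\<le>p. of_nat (p choose Suc t) * g (Suc t)) + (\<Sum>t\<le>p. of_nat (p choose t) * g (Suc t))"
    by (subst sum.atMost_Suc_shift) (simp add: sum.distrib algebra_simps)
  also have "g 0 + (\<Sum>t\<le>p. of_nat (p choose Suc t) * g (Suc t)) = (\<Sum>t\<le>Suc p. of_nat (p choose t) * g t)"
    by (subst sum.atMost_Suc_shift) simp
  finally show ?thesis by (simp add: binomial_eq_0)
qed

definition central_alt_sum :: "nat \<Rightarrow> nat \<Rightarrow> real" where
  "central_alt_sum n p = (\<Sum>t\<le>p. real (p choose t) * (-1/4)^t * real ((2*(n+t)) choose (n+t)))"

definition central_alt_value :: "nat \<Rightarrow> nat \<Rightarrow> real" where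
  "central_alt_value n p = fact (2*p) * fact (2*n) / (4^p * fact p * fact n * fact (n+p))"

text \<open>The value obeys the recurrence that Pascal's rule yields for the sum.\<close>
lemma central_alt_value_rec:
  "central_alt_value n (Suc p) = central_alt_value n p - central_alt_value (Suc n) p / 4"
proof -
  define X where "X = central_alt_value n p"
  have pos: "(fact p::real) > 0" "(fact n::real) > 0" "(fact (n+p)::real) > 0" by auto
  have step_p: "central_alt_value n (Suc p) = X * (2*real p+1) / (2*(real n + real p + 1))"
  proof -
    have "fact (2*Suc p) = (2*real p+2)*(2*real p+1)*(fact (2*p)::real)"
         "fact (n + Suc p) = (real n + real p + 1) * (fact (n+p)::real)"
         "fact (Suc p) = (real p + 1) * (fact p :: real)"
      by (simp_all add: algebra_simps)
    then show ?thesis unfolding X_def central_alt_value_def power_Suc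
      using pos by (simp add: divide_simps) (simp add: algebra_simps)
  qed
  have step_n: "central_alt_value (Suc n) p = X * 2 * (2*real n+1) / (real n + real p + 1)"
  proof -
    have "fact (2*Suc n) = (2*real n+2)*(2*real n+1)*(fact (2*n)::real)"
         "fact (Suc n + p) = (real n + real p + 1) * (fact (n+p)::real)"
         "fact (Suc n) = (real n + 1) * (fact n :: real)"
      by (simp_all add: algebra_simps)
    then show ?thesis unfolding X_def central_alt_value_def
      using pos by (simp add: divide_simps) (simp add: algebra_simps)
  qed
  show ?thesis unfolding step_p step_n X_def[symmetric]
    by (simp add: divide_simps) (simp add: algebra_simps)
qed

lemma central_alt_sum_closed: "central_alt_sum n p = central_alt_value n p"
proof (induction p arbitrary: n)
  case 0
  then show ?case
    by (simp add: central_alt_sum_def central_alt_value_def binomial_fact mult_2)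
next
  case (Suc p)
  define c where "c k = real ((2*k) choose k)" for k
  have sum_c: "central_alt_sum k q = (\<Sum>t\<le>q. real (q choose t) * ((-1/4)^t * c (k+t)))" for k q
    by (simp add: central_alt_sum_def c_def mult.assoc)
  define g where "g t = (-1/4::real)^t * c (n+t)" for t
  have g_Suc: "g (Suc t) = - (1/4) * ((-1/4::real)^t * c (Suc n+t))" for t
    unfolding g_def by simp
  have "central_alt_sum n (Suc p)
      = (\<Sum>t\<le>p. real (p choose t) * g t) + (\<Sum>t\<le>p. real (p choose t) * g (Suc t))"
    unfolding sum_c g_def[symmetric] by (rule binomial_sum_Suc)
  also have "\<dots> = central_alt_sum n p - central_alt_sum (Suc n) p / 4"
    unfolding g_Suc sum_c g_def
    by (simp add: sum_divide_distrib sum_distrib_left algebra_simps sum_negf)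
  finally show ?case using Suc central_alt_value_rec by simp
qed

lemma binomial_taylor_shift:
  fixes h :: "nat \<Rightarrow> 'a::comm_ring_1"
  shows "(\<Sum>r\<le>M. of_nat (M choose r) * h r * (x+c)^r)
       = (\<Sum>s\<le>M. of_nat (M choose s) * x^s * (\<Sum>t\<le>M-s. of_nat ((M-s) choose t) * h (s+t) * c^t))"
proof -
  have choose: "of_nat (M choose s) * of_nat ((M-s) choose (r-s)) = of_nat (M choose r) * of_nat (r choose s)"
    if "s \<le> r" "r \<le> M" for r s
    using choose_mult[OF that] by (metis of_nat_mult)
  have "(\<Sum>s\<le>M. of_nat (M choose s) * x^s * (\<Sum>t\<le>M-s. of_nat ((M-s) choose t) * h (s+t) * c^t))
      = (\<Sum>r\<le>M. \<Sum>s\<le>r. of_nat (M choose s) * of_nat ((M-s) choose (r-s)) * h r * x^s * c^(r-s))"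
    unfolding sum_distrib_left sum_triangle by (intro sum.cong refl) (simp add: algebra_simps)
  also have "\<dots> = (\<Sum>r\<le>M. of_nat (M choose r) * h r * (\<Sum>s\<le>r. of_nat (r choose s) * x^s * c^(r-s)))"
    unfolding sum_distrib_left by (intro sum.cong refl) (simp add: choose algebra_simps)
  finally show ?thesis unfolding binomial_ring by simp
qed

definition scaled_central :: "nat \<Rightarrow> real" where
  "scaled_central k = real ((2*k) choose k) / 2^(3*k)"

text \<open>The coefficient created by moving the inner sum of the theorem from powers of a-1
  to powers of a+1 (substitute a - 1 = (a+1) - 2).\<close>
definition shift_coef :: "nat \<Rightarrow> nat \<Rightarrow> real" where
  "shift_coef m n = (\<Sum>t\<le>m-n. real ((m-n) choose t) * scaled_central (n+t) * (-2)^t)"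

lemma shift_coef_central_alt_sum: "shift_coef m n = central_alt_sum n (m-n) / 8^n"
proof -
  have "scaled_central (n+t) * (-2)^t = (-1/4)^t * real ((2*(n+t)) choose (n+t)) / 8^n" for t
  proof -
    have "(2::real)^(3*(n+t)) = 8^n * 8^t" by (simp add: power_add power_mult)
    moreover have "((-2)::real)^t = (-1/4)^t * 8^t" by (simp flip: power_mult_distrib)
    ultimately show ?thesis by (simp add: scaled_central_def field_simps)
  qed
  then show ?thesis unfolding shift_coef_def central_alt_sum_def
    by (simp add: sum_divide_distrib mult.assoc)
qed

text \<open>e(m,n): the summand of the definition of d_(l,m) without the factor C(k,l).\<close>
definition e_coef :: "nat \<Rightarrow> nat \<Rightarrow> real" where
  "e_coef m n = (1 / 2^(2*m)) * 2^n * real ((2*m - 2*n) choose (m - n)) * real ((m + n) choose m)"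

lemma even_coef_shift_coef:
  assumes "n \<le> m"
  shows "even_coef m n * shift_coef m n = e_coef m n"
proof -
  obtain p where m: "m = n + p" using assms le_Suc_ex by blast
  have binoms: "real ((m+n) choose (2*n)) = fact (m+n) / (fact (2*n) * fact p)"
               "real ((2*m - 2*n) choose (m - n)) = fact (2*p) / (fact p * fact p)"
               "real ((m+n) choose m) = fact (m+n) / (fact m * fact n)"
    using m by (simp_all add: binomial_fact mult_2)
  have powers: "(2::real)^(2*m) = 2^n * 2^n * 4^p" "(8::real)^n = 2^n * 2^n * 2^n"
               "(4::real)^n = 2^n * 2^n"
    using m by (simp_all add: power_add power_mult flip: power_mult_distrib)
  have "(fact n::real) > 0" "(fact p::real) > 0" "(fact m::real) > 0" "(fact (2*n)::real) > 0"
    by auto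
  then show ?thesis
    unfolding even_coef_closed[OF assms] shift_coef_central_alt_sum central_alt_sum_closed
      central_alt_value_def e_coef_def binoms powers
    using m by (simp add: field_simps)
qed

text \<open>Since sum_l C(k,l) a^l = (a+1)^k, the polynomial P_m is  sum_n e(m,n) (a+1)^n.\<close>
lemma e_coef_P_poly: "P_poly m a = (\<Sum>n\<le>m. e_coef m n * (a+1)^n)"
proof -
  have d: "d_coef l m = (\<Sum>k\<le>m. e_coef m k * real (k choose l))" for l
  proof -
    have "d_coef l m = (\<Sum>k=l..m. e_coef m k * real (k choose l))"
      unfolding d_coef_def e_coef_def by (simp add: sum_distrib_left algebra_simps)
    also have "\<dots> = (\<Sum>k\<le>m. e_coef m k * real (k choose l))"
      by (rule sum.mono_neutral_left) auto
    finally show ?thesis .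
  qed
  have binom: "(a+1)^k = (\<Sum>l\<le>m. real (k choose l) * a^l)" if "k \<le> m" for k
    unfolding binomial_ring[of a 1 k] using that by (simp, intro sum.mono_neutral_left) auto
  have "P_poly m a = (\<Sum>l\<le>m. \<Sum>k\<le>m. e_coef m k * real (k choose l) * a^l)"
    unfolding P_poly_def d atLeast0AtMost sum_distrib_right ..
  also have "\<dots> = (\<Sum>k\<le>m. e_coef m k * (\<Sum>l\<le>m. real (k choose l) * a^l))"
    by (subst sum.swap) (simp add: sum_distrib_left mult.assoc)
  also have "\<dots> = (\<Sum>k\<le>m. e_coef m k * (a+1)^k)"
    by (intro sum.cong refl) (simp add: binom)
  finally show ?thesis .
qed

definition Q_poly :: "nat \<Rightarrow> real \<Rightarrow> real" where
  "Q_poly m a = (\<Sum>j=0..m. real ((2*m+1) choose (2*j)) * (a + 1) ^ j *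
         (\<Sum>k=0..m-j. real ((m - j) choose k) * real ((2*(m-k)) choose (m-k)) / 2 ^ (3*(m-k))
            * (a - 1) ^ (m - k - j)))"

lemma Q_poly_inner_reversed:
  assumes "j \<le> m"
  shows "(\<Sum>k=0..m-j. real ((m - j) choose k) * real ((2*(m-k)) choose (m-k)) / 2 ^ (3*(m-k)) * y ^ (m - k - j))
     = (\<Sum>r\<le>m-j. real ((m-j) choose r) * scaled_central (j+r) * y^r)"
proof -
  have "(\<Sum>k=0..m-j. real ((m - j) choose k) * real ((2*(m-k)) choose (m-k)) / 2 ^ (3*(m-k)) * y ^ (m - k - j))
      = (\<Sum>r=0..m-j. real ((m - j) choose (m-j-r)) * scaled_central (m-(m-j-r)) * y ^ (m - (m-j-r) - j))"
    by (subst sum.atLeastAtMost_rev) (simp add: scaled_central_def)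
  also have "\<dots> = (\<Sum>r=0..m-j. real ((m-j) choose r) * scaled_central (j+r) * y^r)"
  proof (intro sum.cong refl)
    fix r assume "r \<in> {0..m-j}"
    then have "(m-j) choose (m-j-r) = (m-j) choose r" "m-(m-j-r) = j+r" "m - (m-j-r) - j = r"
      using assms binomial_symmetric[of r "m-j"] by auto
    then show "real ((m - j) choose (m-j-r)) * scaled_central (m-(m-j-r)) * y ^ (m - (m-j-r) - j)
        = real ((m-j) choose r) * scaled_central (j+r) * y^r"
      by simp
  qed
  finally show ?thesis by (simp add: atLeast0AtMost)
qed

lemma Q_poly_shifted: "Q_poly m a = (\<Sum>n\<le>m. even_coef m n * shift_coef m n * (a+1)^n)"
proof -
  define x where "x = a + 1"
  have inner: "(\<Sum>r\<le>m-j. real ((m-j) choose r) * scaled_central (j+r) * (x + -2)^r)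
      = (\<Sum>s\<le>m-j. real ((m-j) choose s) * x^s * shift_coef m (j+s))" for j
    unfolding binomial_taylor_shift shift_coef_def by (simp add: add.assoc diff_diff_eq)
  have "Q_poly m a = (\<Sum>j=0..m. \<Sum>s\<le>m-j.
      real ((2*m+1) choose (2*j)) * real ((m-j) choose s) * shift_coef m (j+s) * x^(j+s))"
    unfolding Q_poly_def
  proof (intro sum.cong refl)
    fix j assume "j \<in> {0..m}"
    then have shift: "a - 1 = x + -2" and j: "j \<le> m" by (simp_all add: x_def)
    then show "real ((2*m+1) choose (2*j)) * (a + 1) ^ j *
         (\<Sum>k=0..m-j. real ((m - j) choose k) * real ((2*(m-k)) choose (m-k)) / 2 ^ (3*(m-k))
            * (a - 1) ^ (m - k - j))
        = (\<Sum>s\<le>m-j. real ((2*m+1) choose (2*j)) * real ((m-j) choose s) * shift_coef m (j+s) * x^(j+s))"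
      unfolding Q_poly_inner_reversed[OF j] shift inner
      by (simp add: x_def sum_distrib_left power_add algebra_simps)
  qed
  also have "\<dots> = (\<Sum>n\<le>m. even_coef m n * shift_coef m n * x^n)"
    unfolding atLeast0AtMost sum_triangle even_coef_def by (simp add: sum_distrib_right)
  finally show ?thesis by (simp add: x_def)
qed

lemma P_poly_eq_Q_poly: "P_poly m a = Q_poly m a"
  unfolding e_coef_P_poly Q_poly_shifted
  by (intro sum.cong refl) (simp add: even_coef_shift_coef)

text \<open>The coefficient of a^l in (a+1)^J (a-1)^r.\<close>
definition pm_coef :: "nat \<Rightarrow> nat \<Rightarrow> nat \<Rightarrow> real" where
  "pm_coef J r l = (\<Sum>j\<le>l. real (J choose j) * real (r choose (l-j)) * (-1)^(r-(l-j)))"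

lemma pm_coef_expand:
  assumes "J + r \<le> m"
  shows "(a+1)^J * (a-1)^r = (\<Sum>l\<le>m. pm_coef J r l * a^l)"
proof -
  have "(a+1)^J * (a-1)^r
      = (\<Sum>i\<le>J. real (J choose i) * a^i) * (\<Sum>i\<le>r. (real (r choose i) * (-1)^(r-i)) * a^i)"
    unfolding diff_conv_add_uminus binomial_ring by (simp add: algebra_simps)
  also have "\<dots> = (\<Sum>l\<le>J+r. pm_coef J r l * a^l)"
    unfolding pm_coef_def by (subst polynomial_product) (simp_all add: algebra_simps)
  also have "\<dots> = (\<Sum>l\<le>m. pm_coef J r l * a^l)"
    using assms by (intro sum.mono_neutral_left) (auto simp: pm_coef_def intro!: sum.neutral)
  finally show ?thesis .
qed

definition Q_coef :: "nat \<Rightarrow> nat \<Rightarrow> real" where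
  "Q_coef m l = (\<Sum>J\<le>m. \<Sum>r\<le>m-J.
     real ((2*m+1) choose (2*J)) * real ((m-J) choose r) * scaled_central (J+r) * pm_coef J r l)"

lemma Q_poly_expand: "Q_poly m a = (\<Sum>l\<le>m. Q_coef m l * a^l)"
proof -
  have "Q_poly m a = (\<Sum>J\<le>m. \<Sum>r\<le>m-J.
      real ((2*m+1) choose (2*J)) * real ((m-J) choose r) * scaled_central (J+r) * ((a+1)^J * (a-1)^r))"
    unfolding Q_poly_def atLeast0AtMost[of m]
  proof (intro sum.cong refl)
    fix J assume "J \<in> {..m}"
    then have J: "J \<le> m" by simp
    show "real ((2*m+1) choose (2*J)) * (a + 1) ^ J *
         (\<Sum>k=0..m-J. real ((m - J) choose k) * real ((2*(m-k)) choose (m-k)) / 2 ^ (3*(m-k))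
            * (a - 1) ^ (m - k - J))
        = (\<Sum>r\<le>m-J. real ((2*m+1) choose (2*J)) * real ((m-J) choose r) * scaled_central (J+r)
            * ((a+1)^J * (a-1)^r))"
      unfolding Q_poly_inner_reversed[OF J] by (simp add: sum_distrib_left algebra_simps)
  qed
  also have "\<dots> = (\<Sum>J\<le>m. \<Sum>r\<le>m-J. \<Sum>l\<le>m.
      real ((2*m+1) choose (2*J)) * real ((m-J) choose r) * scaled_central (J+r) * pm_coef J r l * a^l)"
    by (intro sum.cong refl) (subst pm_coef_expand[where m=m], auto simp: sum_distrib_left mult.assoc)
  also have "\<dots> = (\<Sum>l\<le>m. Q_coef m l * a^l)"
    unfolding Q_coef_def sum_distrib_right
    by (subst (2) sum.swap, subst sum.swap) (rule refl)
  finally show ?thesis .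
qed

lemma sum_triangle_corner:
  fixes Y :: "nat \<Rightarrow> nat \<Rightarrow> 'a::comm_monoid_add"
  assumes "j \<le> l"
    and vanish: "\<And>J r. J < j \<or> r < l - j \<Longrightarrow> Y J r = 0"
  shows "(\<Sum>J\<le>m. \<Sum>r\<le>m-J. Y J r) = (\<Sum>s=0..m-l. \<Sum>k=s+l..m. Y (j+s) (k-(j+s)))"
proof -
  let ?T = "{(J,r). J + r \<le> m}" and ?C = "{(J,r). j \<le> J \<and> l - j \<le> r \<and> J + r \<le> m}"
  have fin: "finite ?T"
    by (rule finite_subset[of _ "{..m} \<times> {..m}"]) auto
  have "(\<Sum>J\<le>m. \<Sum>r\<le>m-J. Y J r) = (\<Sum>(J,r)\<in>?T. Y J r)"
    by (simp add: pairs_le_eq_Sigma sum.Sigma)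
  also have "\<dots> = (\<Sum>(J,r)\<in>?C. Y J r)"
    using fin by (intro sum.mono_neutral_right) (auto intro: vanish simp: not_le)
  also have "\<dots> = (\<Sum>(s,k)\<in>(SIGMA s:{0..m-l}. {s+l..m}). Y (j+s) (k-(j+s)))"
    using assms(1)
    by (intro sum.reindex_bij_witness[where i="\<lambda>(s,k). (j+s, k-(j+s))" and j="\<lambda>(J,r). (J-j, J+r)"])
       auto
  also have "\<dots> = (\<Sum>s=0..m-l. \<Sum>k=s+l..m. Y (j+s) (k-(j+s)))"
    by (simp add: sum.Sigma)
  finally show ?thesis .
qed

lemma Q_coef_formula:
  "Q_coef m l = (\<Sum>j=0..l. \<Sum>s=0..m-l. \<Sum>k=s+l..m.
         (-1) ^ (k - l - s) / 2 ^ (3*k) * real ((2*k) choose k) * real ((2*m+1) choose (2*s+2*j))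
         * real ((m - s - j) choose (m - k)) * real ((s + j) choose j) * real ((k - s - j) choose (l - j)))"
proof -
  define Y where "Y j J r = real ((2*m+1) choose (2*J)) * real ((m-J) choose r) * scaled_central (J+r)
      * (real (J choose j) * real (r choose (l-j)) * (-1)^(r-(l-j)))" for j J r
  have "Q_coef m l = (\<Sum>j\<le>l. \<Sum>J\<le>m. \<Sum>r\<le>m-J. Y j J r)"
    unfolding Q_coef_def pm_coef_def Y_def sum_distrib_left
    by (subst (2) sum.swap, subst sum.swap) (rule refl)
  also have "\<dots> = (\<Sum>j=0..l. \<Sum>s=0..m-l. \<Sum>k=s+l..m. Y j (j+s) (k-(j+s)))"
    unfolding atLeast0AtMost[of l]
    by (rule sum.cong[OF refl], rule sum_triangle_corner) (auto simp: Y_def binomial_eq_0)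
  also have "\<dots> = (\<Sum>j=0..l. \<Sum>s=0..m-l. \<Sum>k=s+l..m.
         (-1) ^ (k - l - s) / 2 ^ (3*k) * real ((2*k) choose k) * real ((2*m+1) choose (2*s+2*j))
         * real ((m - s - j) choose (m - k)) * real ((s + j) choose j) * real ((k - s - j) choose (l - j)))"
  proof (intro sum.cong refl)
    fix j s k assume "j \<in> {0..l}" "s \<in> {0..m-l}" "k \<in> {s+l..m}"
    then have j: "j \<le> l" and k: "s + l \<le> k" "k \<le> m" by auto
    define r where "r = k - (j+s)"
    have idx: "m - s - j = m - (j+s)" "k - s - j = r" "k - l - s = r - (l-j)" "2*s+2*j = 2*(j+s)"
        "j+s+r = k" "(s+j) choose j = (j+s) choose j"
      using j k by (auto simp: r_def add.commute)
    have sym: "(m-(j+s)) choose (m-k) = (m-(j+s)) choose r"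
      using j k by (subst binomial_symmetric) (auto simp: r_def)
    show "Y j (j+s) (k-(j+s)) =
         (-1) ^ (k - l - s) / 2 ^ (3*k) * real ((2*k) choose k) * real ((2*m+1) choose (2*s+2*j))
         * real ((m - s - j) choose (m - k)) * real ((s + j) choose j) * real ((k - s - j) choose (l - j))"
      unfolding r_def[symmetric] Y_def idx sym by (simp add: scaled_central_def)
  qed
  finally show ?thesis .
qed

lemma d_coef_eq_Q_coef:
  assumes "l \<le> m"
  shows "d_coef l m = Q_coef m l"
proof -
  have "\<forall>a. (\<Sum>i\<le>m. d_coef i m * a^i) = (\<Sum>i\<le>m. Q_coef m i * a^i)"
    using P_poly_eq_Q_poly Q_poly_expand by (simp add: P_poly_def atLeast0AtMost)
  then show ?thesis using assms by (simp add: polyfun_eq_coeffs)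
qed

theorem mainTheorem2:
  fixes l m :: nat
  assumes "l \<le> m"
  shows "d_coef l m =
      (\<Sum>j=0..l. \<Sum>s=0..m-l. \<Sum>k=s+l..m.
         (-1) ^ (k - l - s) / 2 ^ (3*k) * real ((2*k) choose k) * real ((2*m+1) choose (2*s+2*j))
         * real ((m - s - j) choose (m - k)) * real ((s + j) choose j) * real ((k - s - j) choose (l - j)))
    \<and> (\<forall>a::real. P_poly m a =
      (\<Sum>j=0..m. real ((2*m+1) choose (2*j)) * (a + 1) ^ j *
         (\<Sum>k=0..m-j. real ((m - j) choose k) * real ((2*(m-k)) choose (m-k)) / 2 ^ (3*(m-k))
            * (a - 1) ^ (m - k - j))))"
  unfolding d_coef_eq_Q_coef[OF assms] Q_coef_formula P_poly_eq_Q_poly Q_poly_def by simp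

end
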